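(* Let $\lambda=(\lambda_1,\dots,\lambda_k)$ be a partition with Ferrers diagram $\Phi_\lambda$. Then the number of edges of the Hasse diagram of $\mathcal{Y}_\lambda$ is $$\ell(\mathcal{Y}_\lambda)=\sum_{(i,j)\in\Phi_\lambda}\big|\mathcal{Y}_{\lambda^{\swarrow}_{ij}}\big|\cdot\big|\mathcal{Y}_{\lambda^{\nearrow}_{ij}}\big|.$$
   Context: A partition is a finite weakly decreasing sequence $\lambda=(\lambda_1\ge\dots\ge\lambda_k>0)$ of positive integers (the empty partition is allowed). Its Ferrers diagram $\Phi_\lambda$ is the set of cells $(i,j)$ with $1\le i\le k$, $1\le j\le\lambda_i$ (row $i$, column $j$). Partitions are ordered by $(a_1,\dots,a_h)\le(b_1,\dots,b_m)$ iff $h\le m$ and $a_i\le b_i$ for all $i\le h$ (equivalently, containment of diagrams). $\mathcal{Y}_\lambda$ is the set of all partitions $\alpha\le\lambda$ (including the empty partition) with this order, so $|\mathcal{Y}_\emptyset|=1$. For a cell $(i,j)\in\Phi_\lambda$: $\lambda^{\nearrow}_{ij}$ is the partition whose parts are $\lambda_1-j,\lambda_2-j,\dots,\lambda_{i-1}-j$ with zero parts removed (the cells of $\Phi_\lambda$ in rows $1,\dots,i-1$ and columns $>j$); $\lambda^{\swarrow}_{ij}$ is the partition whose parts are $\min(\lambda_{i+1},j-1),\dots,\min(\lambda_k,j-1)$ with zero parts removed (the cells of $\Phi_\lambda$ in rows $>i$ and columns $1,\dots,j-1$). $\ell(P)$ is the number of edges (covering pairs) of the Hasse diagram of a finite poset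 $P$. *)

theory Defs
  imports Main
begin

text \<open>Partitions are represented as lists of naturals, weakly decreasing, all entries positive.
  Rows/columns are 1-indexed as in the paper; the list entry xs ! (i-1) is lambda_i.\<close>

definition is_partition :: "nat list \<Rightarrow> bool" where
  "is_partition xs \<longleftrightarrow> sorted_wrt (\<ge>) xs \<and> (\<forall>x\<in>set xs. 0 < x)"

definition part_le :: "nat list \<Rightarrow> nat list \<Rightarrow> bool" where
  "part_le a b \<longleftrightarrow> length a \<le> length b \<and> (\<forall>i<length a. a ! i \<le> b ! i)"

definition Y :: "nat list \<Rightarrow> nat list set" where
  "Y lam = {a. is_partition a \<and> part_le a lam}"

definition hasse_edges :: "'a set \<Rightarrow> ('a \<Rightarrow> 'a \<Rightarrow> bool) \<Rightarrow> nat" where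
  "hasse_edges P le = card {(a, b). a \<in> P \<and> b \<in> P \<and> le a b \<and> a \<noteq> b \<and>
      \<not> (\<exists>c\<in>P. le a c \<and> le c b \<and> c \<noteq> a \<and> c \<noteq> b)}"

definition ferrers :: "nat list \<Rightarrow> (nat \<times> nat) set" where
  "ferrers lam = {(i, j). 1 \<le> i \<and> i \<le> length lam \<and> 1 \<le> j \<and> j \<le> lam ! (i - 1)}"

definition ne_part :: "nat list \<Rightarrow> nat \<Rightarrow> nat \<Rightarrow> nat list" where
  "ne_part lam i j = filter (\<lambda>x. 0 < x) (map (\<lambda>x. x - j) (take (i - 1) lam))"

definition sw_part :: "nat list \<Rightarrow> nat \<Rightarrow> nat \<Rightarrow> nat list" where
  "sw_part lam i j = filter (\<lambda>x. 0 < x) (map (\<lambda>x. min x (j - 1)) (drop i lam))"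

end

theory Submission
  imports Defs
begin

(* A partition mu is encoded by its sequence of row lengths r |-> mu_(r+1), padded
   with zeros (part_seq). This identifies Y_lambda, as an ordered set, with the antitone
   sequences g : nat -> nat lying pointwise below L = part_seq lambda (antitone_below L).
   In that poset a covering pair is exactly g < g(p := g p + 1), i.e. the addition of one cell
   (p + 1, j) of the Ferrers diagram with j = g p + 1. Hence the Hasse edges are counted by
   summing, over the cells (p, j) of L, the number of g to which (p, j) can be added
   (addable L p j). Such a g is determined by two independent pieces: the rows after p, which
   form an antitone sequence capped by min(L, j - 1), and the rows before p, which are >= j and
   after subtracting j form an antitone sequence below L - j. These caps are the row sequences
   of lambda^SW_ij and lambda^NE_ij, so each summand is |Y_SW| * |Y_NE|. *)

definition part_seq :: "nat list \<Rightarrow> nat \<Rightarrow> nat" where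
  "part_seq a r = (if r < length a then a ! r else 0)"

text \<open>Antitone sequences bounded pointwise by \<open>B\<close>; for \<open>B = part_seq \<mu>\<close> this models \<open>Y \<mu>\<close>.\<close>
definition antitone_below :: "(nat \<Rightarrow> nat) \<Rightarrow> (nat \<Rightarrow> nat) set" where
  "antitone_below B = {g. antimono g \<and> g \<le> B}"

lemma part_seq_Nil [simp]: "part_seq [] r = 0"
  by (simp add: part_seq_def)

lemma part_seq_Cons: "part_seq (y # ys) r = (case r of 0 \<Rightarrow> y | Suc r' \<Rightarrow> part_seq ys r')"
  by (cases r) (auto simp: part_seq_def)

lemma part_le_iff_part_seq:
  assumes pos: "\<forall>x\<in>set a. 0 < x"
  shows "part_le a b \<longleftrightarrow> part_seq a \<le> part_seq b"
proof
  assume "part_le a b"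
  then show "part_seq a \<le> part_seq b"
    by (auto simp: part_le_def part_seq_def le_fun_def)
next
  assume le: "part_seq a \<le> part_seq b"
  have len: "length a \<le> length b"
  proof (rule ccontr)
    assume "\<not> length a \<le> length b"
    then have "0 < a ! length b" using pos by simp
    then show False using le_funD[OF le, of "length b"] \<open>\<not> length a \<le> length b\<close>
      by (simp add: part_seq_def)
  qed
  moreover have "a ! i \<le> b ! i" if "i < length a" for i
    using le_funD[OF le, of i] that len by (simp add: part_seq_def)
  ultimately show "part_le a b" by (simp add: part_le_def)
qed

lemma antimono_part_seq:
  assumes "is_partition a"
  shows "antimono (part_seq a)"
proof (rule antimonoI)
  have sorted: "a ! j \<le> a ! i" if "i < j" "j < length a" for i j
    using assms that by (simp add: is_partition_def sorted_wrt_iff_nth_less)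
  fix x y :: nat assume "x \<le> y"
  then show "part_seq a y \<le> part_seq a x"
    using sorted[of x y] by (cases "x = y") (auto simp: part_seq_def)
qed

lemma inj_on_part_seq: "inj_on part_seq {a. \<forall>x\<in>set a. 0 < x}"
proof (rule inj_onI)
  fix a b assume "a \<in> {a. \<forall>x\<in>set a. 0 < x}" "b \<in> {a. \<forall>x\<in>set a. 0 < x}"
    and eq: "part_seq a = part_seq b"
  then have "part_seq a \<le> part_seq b" "part_seq b \<le> part_seq a"
    and "\<forall>x\<in>set a. 0 < x" "\<forall>x\<in>set b. 0 < x" by auto
  then have "part_le a b" "part_le b a" by (simp_all add: part_le_iff_part_seq)
  then show "a = b"
    by (auto simp: part_le_def intro!: nth_equalityI antisym)
qed

text \<open>Every bounded antitone sequence is the zero-padding of its positive prefix.\<close>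
lemma antitone_below_part_seq_image:
  assumes g: "g \<in> antitone_below (part_seq mu)"
  shows "g \<in> part_seq ` Y mu"
proof -
  have anti: "antimono g" and bound: "\<And>r. g r \<le> part_seq mu r"
    using g by (auto simp: antitone_below_def le_fun_def)
  define m where "m = (LEAST r. g r = 0)"
  have zero_at_length: "g (length mu) = 0"
    using bound[of "length mu"] by (simp add: part_seq_def)
  then have m_le: "m \<le> length mu" unfolding m_def by (rule Least_le)
  have pos: "0 < g r" if "r < m" for r
    using not_less_Least[of r "\<lambda>r. g r = 0"] that unfolding m_def by simp
  have zero: "g r = 0" if "m \<le> r" for r
    using antimonoD[OF anti that] LeastI[of "\<lambda>r. g r = 0", OF zero_at_length]
    unfolding m_def by simp
  define a where "a = map g [0..<m]"
  have "part_seq a = g"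
    using zero by (auto simp: a_def part_seq_def fun_eq_iff)
  moreover have "is_partition a"
    using pos antimonoD[OF anti]
    by (auto simp: a_def is_partition_def sorted_wrt_iff_nth_less)
  moreover have "part_le a mu"
  proof -
    have "g i \<le> mu ! i" if "i < m" for i
      using bound[of i] that m_le by (simp add: part_seq_def)
    then show ?thesis using m_le by (simp add: a_def part_le_def)
  qed
  ultimately show ?thesis by (auto simp: Y_def)
qed

lemma bij_betw_Y:
  "bij_betw part_seq (Y mu) (antitone_below (part_seq mu))"
proof -
  have pos: "Y mu \<subseteq> {a. \<forall>x\<in>set a. 0 < x}"
    by (auto simp: Y_def is_partition_def)
  have "part_seq ` Y mu \<subseteq> antitone_below (part_seq mu)"
    using antimono_part_seq part_le_iff_part_seq
    by (fastforce simp: Y_def is_partition_def antitone_below_def)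
  then show ?thesis
    using inj_on_subset[OF inj_on_part_seq pos] antitone_below_part_seq_image
    by (auto simp: bij_betw_def)
qed

text \<open>\<open>Y \<mu>\<close> is finite: its members are short lists of small numbers.\<close>
lemma finite_Y: "finite (Y mu)"
proof (rule finite_subset)
  show "Y mu \<subseteq> {xs. set xs \<subseteq> {..sum_list mu} \<and> length xs \<le> length mu}"
  proof
    fix a assume "a \<in> Y mu"
    then have le: "part_le a mu" by (simp add: Y_def)
    have "a ! i \<le> sum_list mu" if "i < length a" for i
      using le that elem_le_sum_list[of i mu] by (force simp: part_le_def)
    then show "a \<in> {xs. set xs \<subseteq> {..sum_list mu} \<and> length xs \<le> length mu}"
      using le by (auto simp: part_le_def in_set_conv_nth)
  qed
  show "finite {xs. set xs \<subseteq> {..sum_list mu} \<and> length xs \<le> length mu}"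
    by (rule finite_lists_length_le) simp
qed

lemma part_seq_filter_pos:
  "sorted_wrt (\<ge>) ys \<Longrightarrow> part_seq (filter (\<lambda>x. 0 < x) ys) = part_seq ys"
proof (induction ys)
  case (Cons y ys)
  show ?case
  proof (cases "0 < y")
    case True
    then show ?thesis using Cons by (simp add: fun_eq_iff part_seq_Cons split: nat.split)
  next
    case False
    then have zeros: "\<forall>x\<in>set (y # ys). x = 0" using Cons.prems by auto
    then have "part_seq (y # ys) r = 0" for r
      unfolding part_seq_def by (metis nth_mem)
    with zeros show ?thesis by (simp add: fun_eq_iff filter_empty_conv)
  qed
qed simp

text \<open>Row sequences of the two partitions appearing in the formula; here \<open>i\<close> is the 1-based row index.\<close>
lemma part_seq_sw_part:
  assumes "is_partition lam"
  shows "part_seq (sw_part lam i j) r = min (part_seq lam (i + r)) (j - 1)"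
proof -
  have "sorted_wrt (\<ge>) (map (\<lambda>x. min x (j - 1)) (drop i lam))"
    using assms by (auto simp: is_partition_def intro: sorted_wrt_map_mono sorted_wrt_drop)
  then show ?thesis
    by (simp add: sw_part_def part_seq_filter_pos) (simp add: part_seq_def)
qed

lemma part_seq_ne_part:
  assumes "is_partition lam"
  shows "part_seq (ne_part lam i j) r = (if r < i - 1 then part_seq lam r - j else 0)"
proof -
  have "sorted_wrt (\<ge>) (map (\<lambda>x. x - j) (take (i - 1) lam))"
    using assms by (auto simp: is_partition_def intro: sorted_wrt_map_mono sorted_wrt_take)
  then show ?thesis
    by (simp add: ne_part_def part_seq_filter_pos) (simp add: part_seq_def)
qed

definition covering_pairs :: "'a set \<Rightarrow> ('a \<Rightarrow> 'a \<Rightarrow> bool) \<Rightarrow> ('a \<times> 'a) set" where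
  "covering_pairs P le = {(a, b). a \<in> P \<and> b \<in> P \<and> le a b \<and> a \<noteq> b \<and>
      \<not> (\<exists>c\<in>P. le a c \<and> le c b \<and> c \<noteq> a \<and> c \<noteq> b)}"

lemma hasse_edges_card: "hasse_edges P le = card (covering_pairs P le)"
  by (simp add: hasse_edges_def covering_pairs_def)

lemma hasse_edges_iso:
  assumes bij: "bij_betw f A B"
    and ord: "\<And>a b. a \<in> A \<Longrightarrow> b \<in> A \<Longrightarrow> le a b \<longleftrightarrow> le' (f a) (f b)"
  shows "hasse_edges A le = hasse_edges B le'"
proof -
  have inj: "inj_on f A" and B: "B = f ` A" using bij by (auto simp: bij_betw_def)
  have "(f a, f b) \<in> covering_pairs B le' \<longleftrightarrow> (a, b) \<in> covering_pairs A le"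
    if "a \<in> A" "b \<in> A" for a b
    using that ord inj unfolding covering_pairs_def B by (auto simp: inj_on_eq_iff)
  then have "covering_pairs B le' = map_prod f f ` covering_pairs A le"
    unfolding covering_pairs_def B by (auto simp: image_iff)
  moreover have "inj_on (map_prod f f) (covering_pairs A le)"
    using inj by (auto simp: covering_pairs_def inj_on_def)
  ultimately show ?thesis by (simp add: hasse_edges_card card_image)
qed

lemma between_increment:
  fixes g c :: "'a \<Rightarrow> nat"
  assumes "g \<le> c" "c \<le> g(r := Suc (g r))"
  shows "c = g \<or> c = g(r := Suc (g r))"
proof -
  have off: "c x = g x" if "x \<noteq> r" for x
    using assms that by (metis antisym fun_upd_other le_funD)
  have "c r = g r \<or> c r = Suc (g r)"
    using le_funD[OF assms(1), of r] le_funD[OF assms(2), of r] by auto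
  then show ?thesis
  proof
    assume "c r = g r"
    then show ?thesis using off by (metis ext)
  next
    assume "c r = Suc (g r)"
    then show ?thesis using off by (simp add: fun_eq_iff)
  qed
qed

text \<open>If \<open>g < g'\<close> in \<open>antitone_below B\<close>, then raising \<open>g\<close> at the first position where it
  differs from \<open>g'\<close> stays antitone and below \<open>g'\<close>.\<close>
lemma increment_below:
  assumes g: "g \<in> antitone_below B" and g': "g' \<in> antitone_below B"
    and less: "g \<le> g'" "g \<noteq> g'"
  obtains r where "g(r := Suc (g r)) \<in> antitone_below B" "g(r := Suc (g r)) \<le> g'"
proof -
  have "\<exists>r. g r < g' r"
    using less by (metis antisym le_funD le_funI not_le)
  define r where "r = (LEAST r. g r < g' r)"
  have gr: "g r < g' r" unfolding r_def using \<open>\<exists>r. g r < g' r\<close> by (rule LeastI_ex)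
  have before: "g s = g' s" if "s < r" for s
    using not_less_Least[of s "\<lambda>r. g r < g' r"] that le_funD[OF less(1), of s]
    unfolding r_def by simp
  define c where "c = g(r := Suc (g r))"
  have anti: "antimono g" "antimono g'" and bound: "g \<le> B" "g' \<le> B"
    using g g' by (auto simp: antitone_below_def)
  have "c y \<le> c x" if "x \<le> y" for x y
  proof (cases "y = r")
    case True
    then show ?thesis
      using before[of x] antimonoD[OF anti(2) that] gr that by (cases "x = r") (auto simp: c_def)
  next
    case False
    then show ?thesis using antimonoD[OF anti(1) that] by (auto simp: c_def)
  qed
  then have "antimono c" by (rule antimonoI)
  moreover have "c \<le> g'"
    using gr less(1) by (auto simp: c_def le_fun_def Suc_le_eq)
  ultimately show ?thesis
    using that[of r] bound(2) order_trans by (auto simp: c_def antitone_below_def)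
qed

lemma covering_pairs_antitone_below:
  "(g, g') \<in> covering_pairs (antitone_below B) (\<le>) \<longleftrightarrow>
     g \<in> antitone_below B \<and> g' \<in> antitone_below B \<and> (\<exists>r. g' = g(r := Suc (g r)))"
proof safe
  assume "(g, g') \<in> covering_pairs (antitone_below B) (\<le>)"
  then have g: "g \<in> antitone_below B" and g': "g' \<in> antitone_below B"
    and less: "g \<le> g'" "g \<noteq> g'"
    and cover: "\<And>c. c \<in> antitone_below B \<Longrightarrow> g \<le> c \<Longrightarrow> c \<le> g' \<Longrightarrow> c = g \<or> c = g'"
    by (auto simp: covering_pairs_def)
  then show "g \<in> antitone_below B" "g' \<in> antitone_below B" by auto
  obtain r where "g(r := Suc (g r)) \<in> antitone_below B" "g(r := Suc (g r)) \<le> g'"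
    using increment_below[OF g g' less] .
  moreover have "g(r := Suc (g r)) \<noteq> g" by (metis fun_upd_same n_not_Suc_n)
  moreover have "g \<le> g(r := Suc (g r))" by (simp add: le_fun_def)
  ultimately show "\<exists>r. g' = g(r := Suc (g r))" using cover by metis
next
  fix r assume "g \<in> antitone_below B" "g(r := Suc (g r)) \<in> antitone_below B"
  moreover have "g \<le> g(r := Suc (g r))" "g \<noteq> g(r := Suc (g r))"
    by (auto simp: le_fun_def fun_eq_iff intro!: exI[of _ r])
  ultimately show "(g, g(r := Suc (g r))) \<in> covering_pairs (antitone_below B) (\<le>)"
    using between_increment by (fastforce simp: covering_pairs_def)
qed

text \<open>The cells of the diagram with row sequence \<open>B\<close>: row \<open>p\<close> is 0-based, column \<open>j\<close> is 1-based.\<close>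
definition cells :: "(nat \<Rightarrow> nat) \<Rightarrow> (nat \<times> nat) set" where
  "cells B = {(p, j). 1 \<le> j \<and> j \<le> B p}"

definition addable :: "(nat \<Rightarrow> nat) \<Rightarrow> nat \<Rightarrow> nat \<Rightarrow> (nat \<Rightarrow> nat) set" where
  "addable B p j = {g \<in> antitone_below B. g p = j - 1 \<and> g(p := j) \<in> antitone_below B}"

lemma covering_pairs_Sigma:
  "bij_betw (\<lambda>((p, j), g). (g, g(p := j)))
     (SIGMA (p, j) : cells B. addable B p j) (covering_pairs (antitone_below B) (\<le>))"
proof -
  let ?f = "\<lambda>((p, j), g). (g, g(p := j))"
  have inj: "inj_on ?f (SIGMA (p, j) : cells B. addable B p j)"
  proof (rule inj_onI, clarsimp)
    fix p j p' j' and g :: "nat \<Rightarrow> nat"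
    assume "(p, j) \<in> cells B" "g \<in> addable B p j" and eq: "g(p := j) = g(p' := j')"
    then have "g p \<noteq> j" by (auto simp: cells_def addable_def)
    then have "p = p'" using eq by (metis fun_upd_other fun_upd_same)
    then show "p = p' \<and> j = j'" using eq by (metis fun_upd_same)
  qed
  have into: "?f ((p, j), g) \<in> covering_pairs (antitone_below B) (\<le>)"
    if "(p, j) \<in> cells B" "g \<in> addable B p j" for p j g
  proof -
    have "g \<in> antitone_below B" "g(p := j) \<in> antitone_below B" "j = Suc (g p)"
      using that by (auto simp: cells_def addable_def)
    then show ?thesis by (auto simp: covering_pairs_antitone_below)
  qed
  have onto: "e \<in> ?f ` (SIGMA (p, j) : cells B. addable B p j)"
    if cover: "e \<in> covering_pairs (antitone_below B) (\<le>)" for e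
  proof -
    obtain g r where g: "g \<in> antitone_below B" and g': "g(r := Suc (g r)) \<in> antitone_below B"
      and e: "e = (g, g(r := Suc (g r)))"
      using cover by (cases e) (auto simp: covering_pairs_antitone_below)
    have "Suc (g r) \<le> B r" using le_funD[of _ B r] g' by (force simp: antitone_below_def)
    then have "((r, Suc (g r)), g) \<in> (SIGMA (p, j) : cells B. addable B p j)"
      using g g' by (simp add: cells_def addable_def)
    then show ?thesis using e by force
  qed
  have "?f ` (SIGMA (p, j) : cells B. addable B p j) = covering_pairs (antitone_below B) (\<le>)"
  proof
    show "?f ` (SIGMA (p, j) : cells B. addable B p j) \<subseteq> covering_pairs (antitone_below B) (\<le>)"
      using into by auto
  qed (use onto in blast)
  with inj show ?thesis by (simp add: bij_betw_def)
qed

lemma hasse_edges_antitone_below: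
  assumes "finite (cells B)" "finite (antitone_below B)"
  shows "hasse_edges (antitone_below B) (\<le>) = (\<Sum>(p, j)\<in>cells B. card (addable B p j))"
proof -
  have "hasse_edges (antitone_below B) (\<le>) = card (SIGMA (p, j) : cells B. addable B p j)"
    using bij_betw_same_card[OF covering_pairs_Sigma] by (simp add: hasse_edges_card)
  also have "\<dots> = (\<Sum>(p, j)\<in>cells B. card (addable B p j))"
    using assms by (simp add: card_SigmaI prod.case_distrib addable_def finite_subset)
  finally show ?thesis .
qed

definition rows_after :: "nat \<Rightarrow> (nat \<Rightarrow> nat) \<Rightarrow> nat \<Rightarrow> nat" where
  "rows_after p g r = g (Suc p + r)"

definition rows_before :: "nat \<Rightarrow> nat \<Rightarrow> (nat \<Rightarrow> nat) \<Rightarrow> nat \<Rightarrow> nat" where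
  "rows_before p j g r = (if r < p then g r - j else 0)"

definition glue :: "nat \<Rightarrow> nat \<Rightarrow> (nat \<Rightarrow> nat) \<Rightarrow> (nat \<Rightarrow> nat) \<Rightarrow> nat \<Rightarrow> nat" where
  "glue p j s t r = (if r < p then t r + j else if r = p then j - 1 else s (r - Suc p))"

lemma antimono_rows_after: "antimono g \<Longrightarrow> antimono (rows_after p g)"
  by (auto simp: antimono_def rows_after_def)

lemma antimono_rows_before: "antimono g \<Longrightarrow> antimono (rows_before p j g)"
  by (auto simp: antimono_def rows_before_def intro: diff_le_mono)

lemma rows_before_mono: "g \<le> B \<Longrightarrow> rows_before p j g \<le> rows_before p j B"
  by (auto simp: le_fun_def rows_before_def intro: diff_le_mono)

lemma addable_iff:
  assumes "j \<le> B p"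
  shows "g \<in> addable B p j \<longleftrightarrow> g \<in> antitone_below B \<and> g p = j - 1 \<and> (\<forall>r<p. j \<le> g r)"
proof safe
  fix r assume "g \<in> addable B p j" "r < p"
  then show "j \<le> g r"
    using antimonoD[of "g(p := j)" r p] by (auto simp: addable_def antitone_below_def)
next
  assume g: "g \<in> antitone_below B" "g p = j - 1" "\<forall>r<p. j \<le> g r"
  have "(g(p := j)) y \<le> (g(p := j)) x" if "x \<le> y" for x y
    using g antimonoD[of g x y] antimonoD[of g p y] that
    by (cases "x = p"; cases "y = p") (auto simp: antitone_below_def)
  then show "g \<in> addable B p j"
    using g assms by (auto simp: addable_def antitone_below_def le_fun_def intro: antimonoI)
qed (auto simp: addable_def)

lemma split_addable:
  assumes "j \<le> B p" and g: "g \<in> addable B p j"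
  shows "rows_after p g \<in> antitone_below (rows_after p (\<lambda>r. min (B r) (j - 1)))"
    and "rows_before p j g \<in> antitone_below (rows_before p j B)"
proof -
  have anti: "antimono g" and bound: "g \<le> B" and gp: "g p = j - 1"
    using g by (auto simp: addable_def antitone_below_def)
  have "g (Suc p + r) \<le> min (B (Suc p + r)) (j - 1)" for r
    using antimonoD[OF anti, of p "Suc p + r"] le_funD[OF bound] gp by simp
  then show "rows_after p g \<in> antitone_below (rows_after p (\<lambda>r. min (B r) (j - 1)))"
    using antimono_rows_after[OF anti] by (simp add: antitone_below_def rows_after_def le_fun_def)
  show "rows_before p j g \<in> antitone_below (rows_before p j B)"
    using antimono_rows_before[OF anti] rows_before_mono[OF bound] by (simp add: antitone_below_def)
qed

lemma glue_addable:
  assumes B: "antimono B" "j \<le> B p"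
    and s: "s \<in> antitone_below (rows_after p (\<lambda>r. min (B r) (j - 1)))"
    and t: "t \<in> antitone_below (rows_before p j B)"
  shows "glue p j s t \<in> addable B p j"
proof -
  have s_anti: "antimono s" and s_le: "\<And>r. s r \<le> min (B (Suc p + r)) (j - 1)"
    using s by (auto simp: antitone_below_def rows_after_def le_fun_def)
  have t_anti: "antimono t" and t_le: "\<And>r. t r \<le> rows_before p j B r"
    using t by (auto simp: antitone_below_def le_fun_def)
  have B_ge: "j \<le> B r" if "r \<le> p" for r
    using antimonoD[OF B(1) that] B(2) by simp
  have "glue p j s t y \<le> glue p j s t x" if "x \<le> y" for x y
    using that antimonoD[OF t_anti that] antimonoD[OF s_anti, of "x - Suc p" "y - Suc p"] s_le[of "y - Suc p"]
    by (auto simp: glue_def)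
  moreover have "glue p j s t r \<le> B r" for r
    using t_le[of r] B_ge[of r] s_le[of "r - Suc p"] B(2)
    by (auto simp: glue_def rows_before_def)
  ultimately show ?thesis
    using B(2) by (auto simp: addable_iff antitone_below_def le_fun_def glue_def intro: antimonoI)
qed

lemma glue_split:
  assumes "j \<le> B p" and "g \<in> addable B p j"
  shows "glue p j (rows_after p g) (rows_before p j g) = g"
  using assms by (auto simp: addable_iff glue_def rows_after_def rows_before_def fun_eq_iff)

lemma split_glue:
  assumes "t \<in> antitone_below (rows_before p j B)"
  shows "rows_after p (glue p j s t) = s" and "rows_before p j (glue p j s t) = t"
proof -
  have "t r = 0" if "\<not> r < p" for r
    using assms that le_funD[of t "rows_before p j B" r] by (simp add: antitone_below_def rows_before_def)
  then show "rows_after p (glue p j s t) = s" "rows_before p j (glue p j s t) = t"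
    by (auto simp: fun_eq_iff glue_def rows_after_def rows_before_def)
qed

lemma bij_betw_addable:
  assumes "antimono B" "j \<le> B p"
  shows "bij_betw (\<lambda>g. (rows_after p g, rows_before p j g)) (addable B p j)
           (antitone_below (rows_after p (\<lambda>r. min (B r) (j - 1))) \<times> antitone_below (rows_before p j B))"
  by (rule bij_betw_byWitness[where f' = "\<lambda>(s, t). glue p j s t"])
    (use assms glue_split split_glue split_addable glue_addable in auto)

lemma finite_cells_part_seq: "finite (cells (part_seq lam))"
proof (rule finite_subset)
  show "cells (part_seq lam) \<subseteq> (SIGMA p:{..<length lam}. {1..part_seq lam p})"
    by (auto simp: cells_def part_seq_def split: if_splits)
qed simp

lemma ferrers_eq_cells: "ferrers lam = (\<lambda>(p, j). (Suc p, j)) ` cells (part_seq lam)"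
proof -
  have "(i, j) \<in> (\<lambda>(p, j). (Suc p, j)) ` cells (part_seq lam)" if "(i, j) \<in> ferrers lam" for i j
    using that by (intro image_eqI[of _ _ "(i - 1, j)"]) (auto simp: ferrers_def cells_def part_seq_def)
  then show ?thesis
    by (auto simp: ferrers_def cells_def part_seq_def split: if_splits)
qed

lemma card_addable_part_seq:
  assumes lam: "is_partition lam" and cell: "(p, j) \<in> cells (part_seq lam)"
  shows "card (addable (part_seq lam) p j)
           = card (Y (sw_part lam (Suc p) j)) * card (Y (ne_part lam (Suc p) j))"
proof -
  have "rows_after p (\<lambda>r. min (part_seq lam r) (j - 1)) = part_seq (sw_part lam (Suc p) j)"
    by (simp add: fun_eq_iff rows_after_def part_seq_sw_part[OF lam])
  moreover have "rows_before p j (part_seq lam) = part_seq (ne_part lam (Suc p) j)"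
    by (simp add: fun_eq_iff rows_before_def part_seq_ne_part[OF lam])
  moreover have "j \<le> part_seq lam p" using cell by (simp add: cells_def)
  ultimately show ?thesis
    using bij_betw_same_card[OF bij_betw_addable[OF antimono_part_seq[OF lam]]]
      bij_betw_same_card[OF bij_betw_Y] by (simp add: card_cartesian_product)
qed

theorem mainTheorem18:
  fixes lam :: "nat list"
  assumes "is_partition lam"
  shows "hasse_edges (Y lam) part_le
           = (\<Sum>(i, j)\<in>ferrers lam. card (Y (sw_part lam i j)) * card (Y (ne_part lam i j)))"
proof -
  let ?L = "part_seq lam"
  have "hasse_edges (Y lam) part_le = hasse_edges (antitone_below ?L) (\<le>)"
    by (rule hasse_edges_iso[OF bij_betw_Y]) (simp add: Y_def is_partition_def part_le_iff_part_seq)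
  also have "\<dots> = (\<Sum>(p, j)\<in>cells ?L. card (addable ?L p j))"
    using finite_cells_part_seq bij_betw_finite[OF bij_betw_Y] finite_Y
    by (intro hasse_edges_antitone_below) auto
  also have "\<dots> = (\<Sum>(p, j)\<in>cells ?L. card (Y (sw_part lam (Suc p) j)) * card (Y (ne_part lam (Suc p) j)))"
    using card_addable_part_seq[OF assms] by (intro sum.cong) auto
  also have "\<dots> = (\<Sum>(i, j)\<in>ferrers lam. card (Y (sw_part lam i j)) * card (Y (ne_part lam i j)))"
    unfolding ferrers_eq_cells by (subst sum.reindex) (auto simp: inj_on_def intro!: sum.cong)
  finally show ?thesis .
qed

end
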